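(* Let $n \ge 2$ and let $f : \mathbb{R}^n \to \mathbb{R}$ be a function in $\mathcal{N}^*_n$. Then every level set $f^{-1}(y)$, $y \in \mathbb{R}$, is homeomorphic to an open (possibly empty) subset of $\mathbb{R}^{n-1}$. Consequently, $f$ has unbounded level components, i.e. for every $y\in\mathbb{R}$ every path component of $f^{-1}(y)$ is unbounded.
   Context: $\mathcal{N}^*_n$ (non-singular functions) is the set of functions $\mathbb{R}^n\to\mathbb{R}$ of the form $\nu_\kappa\circ\ell_\kappa\circ\cdots\circ\nu_0\circ\ell_0$ computed by a layered feed-forward network with input dimension $n$, output dimension 1, and all hidden layers of width exactly $n$, where: the activation $\psi:\mathbb{R}\to\mathbb{R}$ is some continuous one-to-one function, each $\nu_i$ applies $\psi$ coordinatewise, each $\ell_i$ ($i<\kappa$) is an affine map $\mathbb{R}^n\to\mathbb{R}^n$ with nonsingular weight matrix, and $\ell_\kappa:\mathbb{R}^n\to\mathbb{R}$ is an affine map with nonzero weight vector. *)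

theory Defs
  imports "HOL-Analysis.Analysis"
begin

definition coordwise :: "(real \<Rightarrow> real) \<Rightarrow> real^'n \<Rightarrow> real^'n" where
  "coordwise \<psi> x = (\<chi> i. \<psi> (x $ i))"

fun hidden_net :: "(real \<Rightarrow> real) \<Rightarrow> ((real^'n^'n) \<times> (real^'n)) list \<Rightarrow> real^'n \<Rightarrow> real^'n" where
  "hidden_net \<psi> [] x = x"
| "hidden_net \<psi> ((A, b) # Ls) x = hidden_net \<psi> Ls (coordwise \<psi> (A *v x + b))"

definition nonsingular_net :: "(real^'n \<Rightarrow> real) \<Rightarrow> bool" where
  "nonsingular_net f \<longleftrightarrow>
     (\<exists>\<psi> Ls w c. continuous_on UNIV \<psi> \<and> inj \<psi> \<and>
        (\<forall>(A, b) \<in> set Ls. invertible A) \<and> w \<noteq> 0 \<and>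
        f = (\<lambda>x. \<psi> (w \<bullet> hidden_net \<psi> Ls x + c)))"

end

theory Submission
  imports Defs
begin

text \<open>The hidden layers compose to a continuous injection \<open>H\<close> of \<open>\<real>\<^sup>n\<close>, which by
  invariance of domain is a homeomorphism onto an open set. Since the activation is injective, a
  level set of \<open>f = \<psi> (w \<bullet> H x + c)\<close> is the \<open>H\<close>-preimage of an affine hyperplane, hence
  homeomorphic to an open subset of that hyperplane, i.e. of \<open>\<real>\<^sup>n\<^sup>-\<^sup>1\<close>.
  The level set is closed and locally path connected, so its path components are closed and open
  in it; a bounded one would be compact and would correspond to a nonempty compact open subset of
  \<open>\<real>\<^sup>n\<^sup>-\<^sup>1\<close>, which does not exist.\<close>

lemma continuous_on_coordwise:
  "continuous_on UNIV \<psi> \<Longrightarrow> continuous_on S (coordwise \<psi> :: real^'n \<Rightarrow> real^'n)"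
  unfolding coordwise_def
  by (rule continuous_on_vec_lambda, rule continuous_on_compose2[of UNIV \<psi>])
    (auto intro: continuous_intros)

lemma inj_coordwise: "inj \<psi> \<Longrightarrow> inj (coordwise \<psi> :: real^'n \<Rightarrow> real^'n)"
  by (auto intro!: injI simp: coordwise_def vec_eq_iff inj_eq)

lemma continuous_on_hidden_net:
  assumes "continuous_on UNIV \<psi>"
  shows "continuous_on UNIV (hidden_net \<psi> Ls :: real^'n \<Rightarrow> real^'n)"
proof (induction Ls)
  case Nil
  then show ?case by simp
next
  case (Cons L Ls)
  obtain A b where L: "L = (A, b)" by fastforce
  have "continuous_on UNIV (\<lambda>x::real^'n. coordwise \<psi> (A *v x + b))"
    by (rule continuous_on_compose2[OF continuous_on_coordwise[OF assms]]) (auto intro: continuous_intros)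
  then show ?case
    unfolding L hidden_net.simps by (rule continuous_on_compose2[OF Cons.IH]) simp
qed

lemma inj_hidden_net:
  assumes "inj \<psi>" and "\<forall>(A, b) \<in> set Ls. invertible A"
  shows "inj (hidden_net \<psi> Ls :: real^'n \<Rightarrow> real^'n)"
  using assms(2)
proof (induction Ls)
  case Nil
  then show ?case by simp
next
  case (Cons L Ls)
  obtain A b where L: "L = (A, b)" by fastforce
  have "inj ((*v) A)" using Cons.prems L by (auto intro: inj_matrix_vector_mult)
  then have "inj (coordwise \<psi> \<circ> (\<lambda>x. x + b) \<circ> (*v) A)"
    by (intro inj_compose inj_coordwise[OF assms(1)]) auto
  moreover have "inj (hidden_net \<psi> Ls)" using Cons by auto
  ultimately show ?case
    unfolding L hidden_net.simps using inj_compose[of "hidden_net \<psi> Ls"] by (simp add: comp_def)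
qed

lemma open_subset_hyperplane_homeomorphic_open:
  fixes V :: "'a::euclidean_space set"
  assumes "open V" and "w \<noteq> 0" and "DIM('m::euclidean_space) = DIM('a) - 1"
  shows "\<exists>U::'m set. open U \<and> V \<inter> {x. w \<bullet> x = a} homeomorphic U"
proof -
  let ?P = "{x. w \<bullet> x = a}"
  have "?P homeomorphic (UNIV :: 'm set)"
    using assms(2,3) DIM_positive[where 'a='a]
    by (subst homeomorphic_affine_sets_eq) (auto simp: affine_hyperplane of_nat_diff)
  then obtain \<phi> \<phi>' where hom: "homeomorphism ?P (UNIV :: 'm set) \<phi> \<phi>'"
    by (auto simp: homeomorphic_def)
  have "openin (top_of_set ?P) (V \<inter> ?P)"
    using assms(1) by (auto simp: openin_open)
  then have "open (\<phi> ` (V \<inter> ?P))"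
    using homeomorphism_imp_open_map[OF hom] by simp
  moreover have "V \<inter> ?P homeomorphic \<phi> ` (V \<inter> ?P)"
    unfolding homeomorphic_def
    by (rule exI, rule exI, rule homeomorphism_of_subsets[OF hom]) (use hom in \<open>auto simp: homeomorphism_def\<close>)
  ultimately show ?thesis by blast
qed

lemma level_set_of_injection_homeomorphic_open:
  fixes H :: "'a::euclidean_space \<Rightarrow> 'a"
  assumes "continuous_on UNIV H" and "inj H" and "w \<noteq> 0"
    and "DIM('m::euclidean_space) = DIM('a) - 1"
  shows "\<exists>U::'m set. open U \<and> {x. w \<bullet> H x = a} homeomorphic U"
proof -
  obtain H' where hom: "homeomorphism UNIV (range H) H H'"
    using invariance_of_domain_homeomorphism[OF open_UNIV assms(1)] assms(2) by auto
  have "{x. w \<bullet> H x = a} homeomorphic range H \<inter> {v. w \<bullet> v = a}"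
    unfolding homeomorphic_def
    by (rule exI, rule exI, rule homeomorphism_of_subsets[OF hom]) auto
  moreover obtain U :: "'m set" where "open U" "range H \<inter> {v. w \<bullet> v = a} homeomorphic U"
    using open_subset_hyperplane_homeomorphic_open[OF _ assms(3,4)]
      invariance_of_domain[OF assms(1) open_UNIV] assms(2) by blast
  ultimately show ?thesis using homeomorphic_trans by blast
qed

lemma unbounded_path_component_of_closed_homeomorphic_open:
  fixes L :: "'a::heine_borel set" and U :: "'m::euclidean_space set"
  assumes "closed L" and "open U" and "L homeomorphic U" and "x \<in> L"
  shows "\<not> bounded (path_component_set L x)"
proof
  let ?C = "path_component_set L x"
  assume "bounded ?C"
  obtain k k' where hom: "homeomorphism L U k k'"
    using assms(3) by (auto simp: homeomorphic_def)
  have "locally path_connected L \<longleftrightarrow> locally path_connected U"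
    by (rule homeomorphic_locally[OF assms(3)]) (rule homeomorphic_path_connectedness)
  then have "locally path_connected L"
    using open_imp_locally_path_connected[OF assms(2)] by blast
  then have "closed ?C" and openin_C: "openin (top_of_set L) ?C"
    by (auto intro: closedin_closed_trans[OF closedin_path_component_locally_path_connected assms(1)]
        openin_path_component_locally_path_connected)
  with \<open>bounded ?C\<close> have "compact ?C"
    by (simp add: compact_eq_bounded_closed)
  then have "compact (k ` ?C)"
    by (intro compact_continuous_image continuous_on_subset[OF homeomorphism_cont1[OF hom]]
        path_component_subset)
  moreover have "open (k ` ?C)"
    by (rule openin_open_trans[OF homeomorphism_imp_open_map[OF hom openin_C] assms(2)])
  moreover have "k x \<in> k ` ?C"
    using assms(4) by (simp add: path_component_refl)
  ultimately show False
    using compact_open[of "k ` ?C"] by blast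
qed

lemma nonsingular_net_continuous:
  fixes f :: "real^'n \<Rightarrow> real"
  assumes "nonsingular_net f"
  shows "continuous_on UNIV f"
proof -
  obtain \<psi> Ls w c where cont_\<psi>: "continuous_on UNIV \<psi>"
    and f: "f = (\<lambda>x. \<psi> (w \<bullet> hidden_net \<psi> Ls x + c))"
    using assms unfolding nonsingular_net_def by blast
  have "continuous_on UNIV (\<lambda>x. w \<bullet> hidden_net \<psi> Ls x + c)"
    by (intro continuous_intros continuous_on_hidden_net[OF cont_\<psi>])
  then show ?thesis
    unfolding f by (rule continuous_on_compose2[OF cont_\<psi>]) simp
qed

lemma nonsingular_net_level_set_homeomorphic_open:
  fixes f :: "real^'n \<Rightarrow> real"
  assumes "nonsingular_net f" and "DIM('m::euclidean_space) = CARD('n) - 1"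
  shows "\<exists>U :: 'm set. open U \<and> f -` {y} homeomorphic U"
proof -
  obtain \<psi> Ls w c where cont_\<psi>: "continuous_on UNIV \<psi>" and "inj \<psi>"
    and "\<forall>(A, b) \<in> set Ls. invertible A" and "w \<noteq> 0"
    and f: "f = (\<lambda>x. \<psi> (w \<bullet> hidden_net \<psi> Ls x + c))"
    using assms(1) unfolding nonsingular_net_def by blast
  let ?H = "hidden_net \<psi> Ls"
  show ?thesis
  proof (cases "y \<in> range \<psi>")
    case True
    then obtain t where "\<psi> t = y" by blast
    with \<open>inj \<psi>\<close> have "f -` {y} = {x. w \<bullet> ?H x = t - c}"
      by (auto simp: f inj_eq)
    moreover have "continuous_on UNIV ?H" and "inj ?H"
      using continuous_on_hidden_net[OF cont_\<psi>] inj_hidden_net \<open>inj \<psi>\<close>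
        \<open>\<forall>(A, b) \<in> set Ls. invertible A\<close> by blast+
    ultimately show ?thesis
      using level_set_of_injection_homeomorphic_open[OF _ _ \<open>w \<noteq> 0\<close>] assms(2) by simp
  next
    case False
    then have "f -` {y} = {}" by (auto simp: f)
    then show ?thesis by (intro exI[of _ "{}"]) simp
  qed
qed

theorem lemma3:
  fixes f :: "real^'n \<Rightarrow> real"
  assumes "CARD('n) \<ge> 2"
    and "DIM('m::euclidean_space) = CARD('n) - 1"
    and "nonsingular_net f"
  shows "(\<forall>y. \<exists>U :: 'm set. open U \<and> (f -` {y}) homeomorphic U) \<and>
         (\<forall>y. \<forall>x \<in> f -` {y}. \<not> bounded (path_component_set (f -` {y}) x))"
proof (intro conjI allI ballI)
  fix y
  show level: "\<exists>U :: 'm set. open U \<and> f -` {y} homeomorphic U"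
    by (rule nonsingular_net_level_set_homeomorphic_open[OF assms(3,2)])
  have "closed (f -` {y})"
    using nonsingular_net_continuous[OF assms(3)] by (simp add: continuous_on_closed_vimage)
  fix x
  assume "x \<in> f -` {y}"
  obtain U :: "'m set" where "open U" and "f -` {y} homeomorphic U"
    using level by blast
  then show "\<not> bounded (path_component_set (f -` {y}) x)"
    using unbounded_path_component_of_closed_homeomorphic_open[OF \<open>closed (f -` {y})\<close>]
      \<open>x \<in> f -` {y}\<close> by blast
qed

end
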